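(* Let $\emptyset\neq\Lambda'\subseteq\mathbb{R}$, let $A$ be a closed linear operator on $X$, and let $(R(t))_{t>0}\subseteq L(X)$ be a strongly continuous operator family such that $R(t)A\subseteq AR(t)$ for all $t>0$ and $\int_0^\infty\|R(t)\|\,dt<\infty$. Let $f:\mathbb{R}\to X$ be bounded, continuous and Levitan $(x,\Lambda',A,\mathcal{P}_K)$-almost periodic (resp. bounded, continuous and Bebutov $(x,\Lambda',A,\mathcal{P}_K)$-uniformly recurrent), and suppose that $f(t)\in D(A)$ for all $t\in\mathbb{R}$ and the function $Af:\mathbb{R}\to X$ is bounded. Then the function $F:\mathbb{R}\to X$, $F(t):=\int_{-\infty}^tR(t-s)f(s)\,ds$, is bounded, continuous and Levitan $(x,\Lambda',A,\mathcal{P}_K)$-almost periodic (resp. bounded, continuous and Bebutov $(x,\Lambda',A,\mathcal{P}_K)$-uniformly recurrent).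
   Context: $(X,\|\cdot\|)$ is a complex Banach space and $L(X)$ the bounded linear operators on $X$. For each non-empty compact $K\subseteq\mathbb{R}$, $\mathcal{P}_K=C(K)$ with the sup-metric. For $g:\mathbb{R}\to X$ with $g(t)\in D(A)$ for all $t$: $g$ is Levitan $(x,\Lambda',A,\mathcal{P}_K)$-almost periodic iff for every $\epsilon>0$ and every non-empty compact $K\subseteq\mathbb{R}$ there is $l>0$ such that for each $t_0\in\Lambda'$ there is $\tau\in[t_0-l,t_0+l]\cap\Lambda'$ with $t\mapsto\|g(t+\tau)-Ag(t)\|$ belonging to $C(K)$ on $K$ and $\sup_{t\in K}\|g(t+\tau)-Ag(t)\|\le\epsilon$. $g$ is Bebutov $(x,\Lambda',A,\mathcal{P}_K)$-uniformly recurrent iff for every non-empty compact $K\subseteq\mathbb{R}$ there is a sequence $(\tau_k)$ in $\Lambda'$ with $|\tau_k|\to+\infty$ such that $t\mapsto\|g(t+\tau_k)-Ag(t)\|$ belongs to $C(K)$ on $K$ and $\lim_{k\to\infty}\sup_{t\in K}\|g(t+\tau_k)-Ag(t)\|=0$. *)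

theory Defs
  imports "HOL-Analysis.Analysis"
begin

definition closed_linear_operator :: "'x::banach set \<Rightarrow> ('x \<Rightarrow> 'x) \<Rightarrow> bool" where
  "closed_linear_operator D A \<longleftrightarrow>
     subspace D \<and>
     (\<forall>x\<in>D. \<forall>y\<in>D. A (x + y) = A x + A y) \<and>
     (\<forall>c. \<forall>x\<in>D. A (c *\<^sub>R x) = c *\<^sub>R A x) \<and>
     closed {(x, A x) | x. x \<in> D}"

text \<open>Levitan (x, Lambda', A, P_K)-almost periodicity, P_K = C(K) with the sup-metric.\<close>
definition levitan_ap ::
  "real set \<Rightarrow> 'x::banach set \<Rightarrow> ('x \<Rightarrow> 'x) \<Rightarrow> (real \<Rightarrow> 'x) \<Rightarrow> bool" where
  "levitan_ap \<Lambda> D A g \<longleftrightarrow>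
     (\<forall>t. g t \<in> D) \<and>
     (\<forall>\<epsilon>>0. \<forall>K. compact K \<and> K \<noteq> {} \<longrightarrow>
        (\<exists>l>0. \<forall>t0\<in>\<Lambda>. \<exists>\<tau>\<in>{t0 - l..t0 + l} \<inter> \<Lambda>.
            continuous_on K (\<lambda>t. norm (g (t + \<tau>) - A (g t))) \<and>
            (SUP t\<in>K. norm (g (t + \<tau>) - A (g t))) \<le> \<epsilon>))"

definition bebutov_ur ::
  "real set \<Rightarrow> 'x::banach set \<Rightarrow> ('x \<Rightarrow> 'x) \<Rightarrow> (real \<Rightarrow> 'x) \<Rightarrow> bool" where
  "bebutov_ur \<Lambda> D A g \<longleftrightarrow>
     (\<forall>t. g t \<in> D) \<and>
     (\<forall>K. compact K \<and> K \<noteq> {} \<longrightarrow>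
        (\<exists>\<tau>::nat \<Rightarrow> real. (\<forall>k. \<tau> k \<in> \<Lambda>) \<and>
            filterlim (\<lambda>k. \<bar>\<tau> k\<bar>) at_top sequentially \<and>
            (\<forall>k. continuous_on K (\<lambda>t. norm (g (t + \<tau> k) - A (g t)))) \<and>
            (\<lambda>k. SUP t\<in>K. norm (g (t + \<tau> k) - A (g t))) \<longlonglongrightarrow> 0))"

end

theory Submission
  imports Defs
begin

text \<open>
  Substituting \<open>s = t - r\<close>, \<open>F t = \<integral>\<^sub>0\<^sup>\<infinity> R r (f (t - r)) dr\<close>. Since \<open>A\<close> is closed and commutes
  with \<open>R\<close>, \<open>F t \<in> D\<close> and \<open>A (F t) = \<integral>\<^sub>0\<^sup>\<infinity> R r (A (f (t - r))) dr\<close>, hence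
  \<open>F (t + \<tau>) - A (F t) = \<integral>\<^sub>0\<^sup>\<infinity> R r (f (t - r + \<tau>) - A (f (t - r))) dr\<close>.
  As \<open>\<parallel>R r\<parallel>\<close> is integrable, this is uniformly small for \<open>t\<close> in a compact set \<open>K\<close> as soon as
  \<open>f (s + \<tau>) - A (f s)\<close> is small for \<open>s\<close> in a suitable larger compact set \<open>K'\<close> (dominated
  convergence). So every \<open>\<tau>\<close> that is good for \<open>f\<close> on \<open>K'\<close> is good for \<open>F\<close> on \<open>K\<close>, which
  transfers both the Levitan and the Bebutov property. The continuity of \<open>A \<circ> f\<close>, needed to
  integrate it, holds because \<open>A \<circ> f\<close> is locally a uniform limit of translates of \<open>f\<close>.
\<close>

section \<open>Henstock--Kurzweil integrals of Banach-space-valued functions\<close>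

lemma norm_rsum_diff_le:
  fixes f g :: "'a::euclidean_space \<Rightarrow> 'b::real_normed_vector"
  assumes \<D>: "\<D> tagged_division_of cbox a b" and fg: "\<And>x. x \<in> cbox a b \<Longrightarrow> norm (f x - g x) \<le> k x"
  shows "norm ((\<Sum>(x,K)\<in>\<D>. Henstock_Kurzweil_Integration.content K *\<^sub>R f x) - (\<Sum>(x,K)\<in>\<D>. Henstock_Kurzweil_Integration.content K *\<^sub>R g x))
    \<le> (\<Sum>(x,K)\<in>\<D>. Henstock_Kurzweil_Integration.content K *\<^sub>R k x)"
proof -
  have "(\<Sum>(x,K)\<in>\<D>. Henstock_Kurzweil_Integration.content K *\<^sub>R f x) - (\<Sum>(x,K)\<in>\<D>. Henstock_Kurzweil_Integration.content K *\<^sub>R g x)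
      = (\<Sum>(x,K)\<in>\<D>. Henstock_Kurzweil_Integration.content K *\<^sub>R (f x - g x))"
    by (simp add: split_def scaleR_diff_right sum_subtractf)
  also have "norm \<dots> \<le> (\<Sum>(x,K)\<in>\<D>. Henstock_Kurzweil_Integration.content K *\<^sub>R k x)"
    unfolding split_def
  proof (rule order_trans[OF norm_sum sum_mono])
    fix p
    assume "p \<in> \<D>"
    then have "fst p \<in> cbox a b" "0 \<le> Henstock_Kurzweil_Integration.content (snd p)"
      using tagged_division_ofD(2,3)[OF \<D>] by (cases p; force)+
    then show "norm (Henstock_Kurzweil_Integration.content (snd p) *\<^sub>R (f (fst p) - g (fst p))) \<le> Henstock_Kurzweil_Integration.content (snd p) *\<^sub>R k (fst p)"
      using fg by (simp add: mult_left_mono)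
  qed
  finally show ?thesis .
qed

lemma integrable_on_cbox_approx:
  fixes f :: "'a::euclidean_space \<Rightarrow> 'b::banach"
  assumes approx: "\<And>e. e > 0 \<Longrightarrow> \<exists>g k. g integrable_on cbox a b \<and> k integrable_on cbox a b \<and>
              (\<forall>x\<in>cbox a b. norm (f x - g x) \<le> k x) \<and> integral (cbox a b) k < e"
  shows "f integrable_on cbox a b"
  unfolding integrable_Cauchy
proof (intro allI impI)
  fix e :: real
  assume "e > 0"
  then obtain g k where g: "g integrable_on cbox a b" and k: "k integrable_on cbox a b"
    and fg: "\<forall>x\<in>cbox a b. norm (f x - g x) \<le> k x" and small: "integral (cbox a b) k < e/5"
    using approx[of "e/5"] by auto
  let ?S = "\<lambda>\<D> h. \<Sum>(x,K)\<in>\<D>. Henstock_Kurzweil_Integration.content K *\<^sub>R h x"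
  obtain \<gamma>1 where "gauge \<gamma>1" and \<gamma>1: "\<And>\<D>1 \<D>2. \<D>1 tagged_division_of cbox a b \<Longrightarrow> \<gamma>1 fine \<D>1 \<Longrightarrow>
      \<D>2 tagged_division_of cbox a b \<Longrightarrow> \<gamma>1 fine \<D>2 \<Longrightarrow> norm (?S \<D>1 g - ?S \<D>2 g) < e/5"
    using g \<open>e > 0\<close> unfolding integrable_Cauchy by (meson divide_pos_pos zero_less_numeral)
  obtain \<gamma>2 where "gauge \<gamma>2" and \<gamma>2: "\<And>\<D>. \<D> tagged_division_of cbox a b \<Longrightarrow> \<gamma>2 fine \<D> \<Longrightarrow>
      norm (?S \<D> k - integral (cbox a b) k) < e/5"
    using integrable_integral[OF k] \<open>e > 0\<close> unfolding has_integral by (meson divide_pos_pos zero_less_numeral)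
  have close: "norm (?S \<D> f - ?S \<D> g) < 2*e/5" if \<D>: "\<D> tagged_division_of cbox a b" "\<gamma>2 fine \<D>" for \<D>
  proof -
    have "norm (?S \<D> f - ?S \<D> g) \<le> ?S \<D> k"
      by (rule norm_rsum_diff_le[OF \<D>(1)]) (use fg in blast)
    also have "\<dots> < 2*e/5"
      using \<gamma>2[OF \<D>] small unfolding real_norm_def abs_diff_less_iff by linarith
    finally show ?thesis .
  qed
  show "\<exists>\<gamma>. gauge \<gamma> \<and> (\<forall>\<D>1 \<D>2. \<D>1 tagged_division_of cbox a b \<and> \<gamma> fine \<D>1 \<and>
      \<D>2 tagged_division_of cbox a b \<and> \<gamma> fine \<D>2 \<longrightarrow> norm (?S \<D>1 f - ?S \<D>2 f) < e)"
  proof (intro exI conjI allI impI)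
    show "gauge (\<lambda>x. \<gamma>1 x \<inter> \<gamma>2 x)"
      using \<open>gauge \<gamma>1\<close> \<open>gauge \<gamma>2\<close> by (rule gauge_Int)
    fix \<D>1 \<D>2
    assume "\<D>1 tagged_division_of cbox a b \<and> (\<lambda>x. \<gamma>1 x \<inter> \<gamma>2 x) fine \<D>1 \<and>
      \<D>2 tagged_division_of cbox a b \<and> (\<lambda>x. \<gamma>1 x \<inter> \<gamma>2 x) fine \<D>2"
    then have "norm (?S \<D>1 f - ?S \<D>1 g) < 2*e/5" "norm (?S \<D>2 g - ?S \<D>2 f) < 2*e/5"
      and "norm (?S \<D>1 g - ?S \<D>2 g) < e/5"
      using close \<gamma>1 by (auto simp: fine_Int norm_minus_commute)
    then have "norm (?S \<D>1 f - ?S \<D>2 f) < 2*e/5 + e/5 + 2*e/5"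
      by (meson norm_diff_triangle_less)
    then show "norm (?S \<D>1 f - ?S \<D>2 f) < e"
      by simp
  qed
qed

lemma integrable_on_approx:
  fixes f :: "'a::euclidean_space \<Rightarrow> 'b::banach"
  assumes bound: "\<And>x. x \<in> S \<Longrightarrow> norm (f x) \<le> h x" and h: "h integrable_on S"
    and approx: "\<And>e. e > 0 \<Longrightarrow> \<exists>g k. g integrable_on S \<and> k integrable_on S \<and>
              (\<forall>x\<in>S. norm (f x - g x) \<le> k x) \<and> integral S k < e"
  shows "f integrable_on S"
proof (rule integrable_on_all_intervals_integrable_bound[OF _ bound h])
  fix a b :: 'a
  let ?r = "\<lambda>u x. if x \<in> S then u x else 0"
  show "?r f integrable_on cbox a b"
  proof (rule integrable_on_cbox_approx)
    fix e :: real
    assume "e > 0"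
    then obtain g k where g: "g integrable_on S" and k: "k integrable_on S"
      and fg: "\<forall>x\<in>S. norm (f x - g x) \<le> k x" and small: "integral S k < e"
      using approx by blast
    have "integral (cbox a b) (?r k) = integral (S \<inter> cbox a b) k"
      by (rule integral_restrict_Int)
    also have "\<dots> \<le> integral S k"
      using fg k integrable_altD(1)[OF k] by (intro integral_subset_le)
        (auto simp: integrable_restrict_Int intro: order_trans[OF norm_ge_zero])
    finally have "integral (cbox a b) (?r k) < e"
      using small by linarith
    then show "\<exists>g k. g integrable_on cbox a b \<and> k integrable_on cbox a b \<and>
        (\<forall>x\<in>cbox a b. norm (?r f x - g x) \<le> k x) \<and> integral (cbox a b) k < e"
      using fg integrable_altD(1)[OF g] integrable_altD(1)[OF k] by (intro exI[of _ "?r g"] exI[of _ "?r k"]) auto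
  qed
qed

lemma has_integral_cbox_in_closed_subspace:
  fixes g :: "'a::euclidean_space \<Rightarrow> 'b::real_normed_vector"
  assumes g: "(g has_integral J) (cbox a b)" and V: "closed V" "subspace V"
    and gV: "\<And>x. x \<in> cbox a b \<Longrightarrow> g x \<in> V"
  shows "J \<in> V"
proof (rule Lim_in_closed_set[OF V(1) _ division_filter_not_empty g[unfolded has_integral_cbox]])
  have sum_in_V: "(\<Sum>(x,K)\<in>\<D>. Henstock_Kurzweil_Integration.content K *\<^sub>R g x) \<in> V" if "\<D> tagged_division_of cbox a b" for \<D>
  proof (intro subspace_sum[OF V(2)])
    fix p
    assume "p \<in> \<D>"
    then have "fst p \<in> cbox a b"
      using tagged_division_ofD(2,3)[OF that] by (cases p) force
    then show "(\<lambda>(x,K). Henstock_Kurzweil_Integration.content K *\<^sub>R g x) p \<in> V"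
      using gV V(2) by (simp add: split_def subspace_scale)
  qed
  show "\<forall>\<^sub>F \<D> in division_filter (cbox a b). (\<Sum>(x,K)\<in>\<D>. Henstock_Kurzweil_Integration.content K *\<^sub>R g x) \<in> V"
    by (rule eventually_mono[OF eventually_division_filter_tagged_division sum_in_V])
qed

lemma has_integral_in_closed_subspace:
  fixes f :: "'a::euclidean_space \<Rightarrow> 'b::banach"
  assumes f: "(f has_integral I) S" and V: "closed V" "subspace V"
    and fV: "\<And>x. x \<in> S \<Longrightarrow> f x \<in> V"
  shows "I \<in> V"
proof -
  let ?g = "\<lambda>x. if x \<in> S then f x else 0"
  have "\<exists>y\<in>V. dist y I < e" if "e > 0" for e
  proof -
    have "\<forall>e>0. \<exists>B>0. \<forall>a b. ball 0 B \<subseteq> cbox a b \<longrightarrow> norm (integral (cbox a b) ?g - I) < e"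
      using f unfolding has_integral_alt' by (rule conjunct2)
    then obtain B where "ball 0 B \<subseteq> cbox a b \<Longrightarrow> norm (integral (cbox a b) ?g - I) < e" for a b
      using \<open>e > 0\<close> by blast
    moreover obtain a b :: 'a where "ball 0 B \<subseteq> cbox a b"
      using bounded_subset_cbox_symmetric[OF bounded_ball] by blast
    moreover have "integral (cbox a b) ?g \<in> V"
    proof (rule has_integral_cbox_in_closed_subspace[OF _ V])
      show "(?g has_integral integral (cbox a b) ?g) (cbox a b)"
        using integrable_altD(1)[OF has_integral_integrable[OF f]] by (rule integrable_integral)
      show "?g x \<in> V" for x
        using fV subspace_0[OF V(2)] by simp
    qed
    ultimately show ?thesis
      by (auto simp: dist_norm)
  qed
  then show ?thesis
    using closed_approachable[OF V(1)] by blast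
qed

lemma subspace_graph:
  assumes "closed_linear_operator D A"
  shows "subspace {(x, A x) | x. x \<in> D}"
proof -
  have D: "subspace D" and add: "\<And>x y. x \<in> D \<Longrightarrow> y \<in> D \<Longrightarrow> A (x + y) = A x + A y"
    and scale: "\<And>c x. x \<in> D \<Longrightarrow> A (c *\<^sub>R x) = c *\<^sub>R A x"
    using assms unfolding closed_linear_operator_def by auto
  have "A 0 = 0"
    using scale[of 0 0] subspace_0[OF D] by simp
  show ?thesis
    unfolding subspace_def
  proof (intro conjI ballI allI)
    show "0 \<in> {(x, A x) | x. x \<in> D}"
      using \<open>A 0 = 0\<close> subspace_0[OF D] by (auto simp: zero_prod_def)
  next
    fix p q
    assume "p \<in> {(x, A x) | x. x \<in> D}" "q \<in> {(x, A x) | x. x \<in> D}"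
    then obtain x y where "p = (x, A x)" "q = (y, A y)" "x \<in> D" "y \<in> D"
      by blast
    then show "p + q \<in> {(x, A x) | x. x \<in> D}"
      using add subspace_add[OF D] by (intro CollectI exI[of _ "x + y"]) simp
  next
    fix c :: real and p
    assume "p \<in> {(x, A x) | x. x \<in> D}"
    then obtain x where "p = (x, A x)" "x \<in> D"
      by blast
    then show "c *\<^sub>R p \<in> {(x, A x) | x. x \<in> D}"
      using scale subspace_scale[OF D] by (intro CollectI exI[of _ "c *\<^sub>R x"]) simp
  qed
qed

lemma has_integral_closed_linear_operator:
  fixes \<phi> :: "'a::euclidean_space \<Rightarrow> 'x::banach"
  assumes A: "closed_linear_operator D A"
    and \<phi>: "(\<phi> has_integral I) S" and A\<phi>: "((\<lambda>x. A (\<phi> x)) has_integral J) S"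
    and D: "\<And>x. x \<in> S \<Longrightarrow> \<phi> x \<in> D"
  shows "I \<in> D \<and> A I = J"
proof -
  have "((\<lambda>x. (\<phi> x, 0)) has_integral (I, 0)) S" "((\<lambda>x. (0, A (\<phi> x))) has_integral (0, J)) S"
    using has_integral_linear[OF \<phi> bounded_linear_Pair[OF bounded_linear_ident bounded_linear_zero]]
      has_integral_linear[OF A\<phi> bounded_linear_Pair[OF bounded_linear_zero bounded_linear_ident]]
    by (simp_all add: o_def)
  from has_integral_add[OF this]
  have "((\<lambda>x. (\<phi> x, A (\<phi> x))) has_integral (I, J)) S"
    by simp
  moreover have "closed {(x, A x) | x. x \<in> D}"
    using A unfolding closed_linear_operator_def by blast
  ultimately have "(I, J) \<in> {(x, A x) | x. x \<in> D}"
    using has_integral_in_closed_subspace subspace_graph[OF A] D by blast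
  then show ?thesis
    by auto
qed

lemma has_integral_reflect_shift_cbox:
  fixes \<phi> :: "real \<Rightarrow> 'b::real_normed_vector"
  assumes "(\<phi> has_integral z) (cbox (t - b) (t - a))"
  shows "((\<lambda>s. \<phi> (t - s)) has_integral z) (cbox a b)"
proof -
  have "((\<lambda>x. \<phi> ((-1) *\<^sub>R x + t)) has_integral (1 / (\<bar>-1\<bar> ^ DIM(real))) *\<^sub>R z)
      ((\<lambda>x. (1 / (-1)) *\<^sub>R x + -((1 / (-1)) *\<^sub>R t)) ` cbox (t - b) (t - a))"
    by (rule has_integral_affinity[OF assms]) simp
  then show ?thesis
    by simp
qed

lemma has_integral_reflect_shift:
  fixes \<phi> :: "real \<Rightarrow> 'b::banach"
  assumes \<phi>: "(\<phi> has_integral I) {0<..}"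
  shows "((\<lambda>s. \<phi> (t - s)) has_integral I) {..<t}"
proof -
  let ?\<phi>0 = "\<lambda>r. if r \<in> {0<..} then \<phi> r else 0"
  let ?\<psi>0 = "\<lambda>s. if s \<in> {..<t} then \<phi> (t - s) else 0"
  have "(\<lambda>s. ?\<phi>0 (t - s)) = ?\<psi>0"
    by auto
  then have \<psi>0: "(?\<psi>0 has_integral integral (cbox (t - b) (t - a)) ?\<phi>0) (cbox a b)" for a b
    using has_integral_reflect_shift_cbox[OF integrable_integral[OF
        integrable_altD(1)[OF has_integral_integrable[OF \<phi>], of "t - b" "t - a"]]]
    by simp
  show ?thesis
    unfolding has_integral_alt'[of _ _ "{..<t}"]
  proof (intro conjI allI impI)
    fix e :: real
    assume "e > 0"
    then obtain B where "B > 0" and B: "\<And>a b. ball 0 B \<subseteq> cbox a b \<Longrightarrow>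
        norm (integral (cbox a b) ?\<phi>0 - I) < e"
      using \<phi> unfolding has_integral_alt' by blast
    show "\<exists>B>0. \<forall>a b. ball 0 B \<subseteq> cbox a b \<longrightarrow> norm (integral (cbox a b) ?\<psi>0 - I) < e"
    proof (intro exI[of _ "B + \<bar>t\<bar>"] conjI allI impI)
      fix a b :: real
      assume ab: "ball 0 (B + \<bar>t\<bar>) \<subseteq> cbox a b"
      have "ball 0 B \<subseteq> cbox (t - b) (t - a)"
      proof
        fix y :: real
        assume "y \<in> ball 0 B"
        then have "t - y \<in> ball 0 (B + \<bar>t\<bar>)"
          by (auto simp: dist_real_def)
        then show "y \<in> cbox (t - b) (t - a)"
          using ab by auto
      qed
      then show "norm (integral (cbox a b) ?\<psi>0 - I) < e"
        using B integral_unique[OF \<psi>0] by simp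
    qed (use \<open>B > 0\<close> in simp)
  qed (use \<psi>0 in blast)
qed

section \<open>The uniform boundedness principle\<close>

lemma Baire_closed_cover:
  fixes E :: "nat \<Rightarrow> 'a::complete_space set"
  assumes "\<And>n. closed (E n)" and "(\<Union>n. E n) = UNIV"
  obtains n where "interior (E n) \<noteq> {}"
proof -
  have "\<exists>n. interior (E n) \<noteq> {}"
  proof (rule ccontr)
    assume "\<nexists>n. interior (E n) \<noteq> {}"
    then have "euclidean interior_of (\<Union>(range E)) = {}"
      using assms(1) by (intro Baire_category_alt) (auto simp: completely_metrizable_space_euclidean
          euclidean_interior_of closed_closedin[symmetric])
    then show False
      using assms(2) by (simp add: euclidean_interior_of)
  qed
  then show thesis
    using that by blast
qed

lemma uniform_boundedness:
  fixes T :: "'i \<Rightarrow> 'a::banach \<Rightarrow> 'b::real_normed_vector"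
  assumes lin: "\<And>i. i \<in> I \<Longrightarrow> bounded_linear (T i)"
    and pointwise: "\<And>x. bounded ((\<lambda>i. T i x) ` I)"
  obtains B where "\<And>i x. i \<in> I \<Longrightarrow> norm (T i x) \<le> B * norm x"
proof -
  define E where "E n = {x. \<forall>i\<in>I. norm (T i x) \<le> real n}" for n :: nat
  have "closed (E n)" for n
  proof -
    have "closed {x. norm (T i x) \<le> real n}" if "i \<in> I" for i
      using lin[OF that] by (intro closed_Collect_le continuous_on_norm linear_continuous_on continuous_on_const)
    then have "closed (\<Inter>i\<in>I. {x. norm (T i x) \<le> real n})"
      by blast
    moreover have "E n = (\<Inter>i\<in>I. {x. norm (T i x) \<le> real n})"
      by (auto simp: E_def)
    ultimately show ?thesis
      by simp
  qed
  moreover have "(\<Union>n. E n) = UNIV"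
  proof -
    have "x \<in> (\<Union>n. E n)" for x
    proof -
      obtain b where "\<forall>i\<in>I. norm (T i x) \<le> b"
        using pointwise[of x] by (auto simp: bounded_iff)
      moreover obtain n where "b \<le> real n"
        using real_arch_simple by blast
      ultimately have "x \<in> E n"
        by (auto simp: E_def)
      then show ?thesis
        by blast
    qed
    then show ?thesis
      by blast
  qed
  \<comment> \<open>Some \<open>E n\<close> contains a ball around some \<open>x0\<close>, so \<open>T i\<close> is bounded by \<open>2 n\<close> on a ball around 0.\<close>
  ultimately obtain n where "interior (E n) \<noteq> {}"
    by (rule Baire_closed_cover)
  then obtain x0 d where "d > 0" and ball: "ball x0 d \<subseteq> E n"
    by (meson ex_in_conv open_contains_ball open_interior interior_subset subset_trans)
  then have x0: "x0 \<in> E n"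
    by auto
  show ?thesis
  proof (rule that)
    fix i x
    assume "i \<in> I"
    interpret T: bounded_linear "T i"
      by (rule lin[OF \<open>i \<in> I\<close>])
    show "norm (T i x) \<le> 4 * real n / d * norm x"
    proof (cases "x = 0")
      case False
      define c where "c = d / (2 * norm x)"
      have "c > 0" "norm (c *\<^sub>R x) < d"
        using False \<open>d > 0\<close> by (auto simp: c_def)
      then have "x0 + c *\<^sub>R x \<in> E n"
        using ball by (auto simp: dist_norm)
      then have "norm (T i (x0 + c *\<^sub>R x) - T i x0) \<le> 2 * real n"
        using x0 \<open>i \<in> I\<close> norm_triangle_ineq4[of "T i (x0 + c *\<^sub>R x)" "T i x0"] by (force simp: E_def)
      then have "c * norm (T i x) \<le> 2 * real n"
        using \<open>c > 0\<close> by (simp add: T.add T.scale)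
      then show ?thesis
        using False \<open>c > 0\<close> \<open>d > 0\<close> by (simp add: c_def field_simps)
    qed (simp add: T.zero)
  qed
qed

section \<open>Translates of bounded continuous functions\<close>

lemma bcontfun_bound:
  assumes "y \<in> bcontfun"
  obtains M where "\<And>s. norm (y s) \<le> M"
  using assms by (auto simp: bcontfun_def bounded_iff)

lemma continuous_on_reflect_bcontfun:
  fixes y :: "real \<Rightarrow> 'a::metric_space"
  assumes "y \<in> bcontfun"
  shows "continuous_on S (\<lambda>r. y (t - r))"
proof -
  have "continuous_on UNIV y"
    using assms by (simp add: bcontfun_def)
  moreover have "continuous_on S (\<lambda>r. t - r)"
    by (intro continuous_intros)
  ultimately show ?thesis
    using continuous_on_compose2 by blast
qed

lemma bcontfun_shift:
  fixes y :: "real \<Rightarrow> 'a::metric_space"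
  assumes "y \<in> bcontfun"
  shows "(\<lambda>s. y (s + \<tau>)) \<in> bcontfun"
proof -
  have "continuous_on UNIV y" "bounded (range y)"
    using assms by (simp_all add: bcontfun_def)
  moreover have "continuous_on UNIV (\<lambda>s. s + \<tau>)"
    by (intro continuous_intros)
  ultimately show ?thesis
    unfolding bcontfun_def using continuous_on_compose2[of UNIV y UNIV "\<lambda>s. s + \<tau>"]
    by (auto intro: bounded_subset)
qed

lemma continuous_on_norm_translate_diff:
  fixes g h :: "real \<Rightarrow> 'a::real_normed_vector"
  assumes "g \<in> bcontfun" "h \<in> bcontfun"
  shows "continuous_on K (\<lambda>t. norm (g (t + \<tau>) - h t))"
proof -
  have "continuous_on UNIV (\<lambda>t. g (t + \<tau>))" "continuous_on UNIV h"
    using bcontfun_shift[OF assms(1)] assms(2) by (simp_all add: bcontfun_def)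
  then have "continuous_on UNIV (\<lambda>t. norm (g (t + \<tau>) - h t))"
    by (intro continuous_on_norm continuous_on_diff)
  then show ?thesis
    by (rule continuous_on_subset) simp
qed

lemma SUP_le_iff_continuous_on_compact:
  fixes \<phi> :: "'a::topological_space \<Rightarrow> real"
  assumes "compact K" "K \<noteq> {}" "continuous_on K \<phi>"
  shows "(SUP t\<in>K. \<phi> t) \<le> e \<longleftrightarrow> (\<forall>t\<in>K. \<phi> t \<le> e)"
  using assms by (intro cSUP_le_iff bounded_imp_bdd_above compact_imp_bounded compact_continuous_image)

lemma continuous_on_if_uniformly_approximable:
  fixes g :: "'a::topological_space \<Rightarrow> 'b::metric_space"
  assumes approx: "\<And>\<epsilon>. \<epsilon> > 0 \<Longrightarrow> \<exists>h. continuous_on S h \<and> (\<forall>x\<in>S. dist (h x) (g x) \<le> \<epsilon>)"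
  shows "continuous_on S g"
proof -
  have "\<forall>n. \<exists>h. continuous_on S h \<and> (\<forall>x\<in>S. dist (h x) (g x) \<le> inverse (real (Suc n)))"
    using approx by simp
  then obtain h where h: "\<And>n. continuous_on S (h n)"
    "\<And>n x. x \<in> S \<Longrightarrow> dist (h n x) (g x) \<le> inverse (real (Suc n))"
    using choice[of "\<lambda>n h. continuous_on S h \<and> (\<forall>x\<in>S. dist (h x) (g x) \<le> inverse (real (Suc n)))"]
    by fast
  show ?thesis
  proof (rule uniform_limit_theorem)
    show "\<forall>\<^sub>F n in sequentially. continuous_on S (h n)"
      using h(1) by simp
    show "uniform_limit S h g sequentially"
    proof (rule uniform_limitI)
      fix e :: real
      assume "e > 0"
      then have "\<forall>\<^sub>F n in sequentially. inverse (real (Suc n)) < e"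
        by (rule order_tendstoD(2)[OF LIMSEQ_inverse_real_of_nat])
      then show "\<forall>\<^sub>F n in sequentially. \<forall>x\<in>S. dist (h n x) (g x) < e"
      proof eventually_elim
        case (elim n)
        show ?case
        proof
          fix x
          assume "x \<in> S"
          then have "dist (h n x) (g x) \<le> inverse (real (Suc n))"
            by (rule h(2))
          then show "dist (h n x) (g x) < e"
            using elim by linarith
        qed
      qed
    qed
  qed simp
qed

lemma continuous_on_if_translates_approximate:
  fixes f g :: "real \<Rightarrow> 'a::real_normed_vector"
  assumes f: "continuous_on UNIV f"
    and approx: "\<And>K \<epsilon>. compact K \<Longrightarrow> K \<noteq> {} \<Longrightarrow> \<epsilon> > 0 \<Longrightarrow> \<exists>\<tau>. \<forall>t\<in>K. norm (f (t + \<tau>) - g t) \<le> \<epsilon>"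
  shows "continuous_on UNIV g"
proof -
  have "continuous_on (cball t0 1) g" for t0
  proof (rule continuous_on_if_uniformly_approximable)
    fix \<epsilon> :: real
    assume "\<epsilon> > 0"
    then obtain \<tau> where \<tau>: "\<forall>t\<in>cball t0 1. norm (f (t + \<tau>) - g t) \<le> \<epsilon>"
      using approx[of "cball t0 1" \<epsilon>] by auto
    have "continuous_on (cball t0 1) (\<lambda>t. f (t + \<tau>))"
      by (intro continuous_on_compose2[OF f] continuous_intros) auto
    then show "\<exists>h. continuous_on (cball t0 1) h \<and> (\<forall>t\<in>cball t0 1. dist (h t) (g t) \<le> \<epsilon>)"
      using \<tau> by (auto simp: dist_norm)
  qed
  then have "isCont g t0" for t0
    by (rule continuous_on_interior[of "cball t0 1"]) simp
  then show ?thesis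
    by (simp add: continuous_at_imp_continuous_on)
qed

lemma levitan_ap_approx:
  assumes "levitan_ap \<Lambda> D A g" "\<epsilon> > 0" "compact K" "K \<noteq> {}"
  shows "\<exists>l>0. \<forall>t0\<in>\<Lambda>. \<exists>\<tau>\<in>{t0 - l..t0 + l} \<inter> \<Lambda>. \<forall>t\<in>K. norm (g (t + \<tau>) - A (g t)) \<le> \<epsilon>"
proof -
  have lev: "\<forall>\<epsilon>>0. \<forall>K. compact K \<and> K \<noteq> {} \<longrightarrow> (\<exists>l>0. \<forall>t0\<in>\<Lambda>. \<exists>\<tau>\<in>{t0 - l..t0 + l} \<inter> \<Lambda>.
      continuous_on K (\<lambda>t. norm (g (t + \<tau>) - A (g t))) \<and> (SUP t\<in>K. norm (g (t + \<tau>) - A (g t))) \<le> \<epsilon>)"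
    using assms(1) unfolding levitan_ap_def by (rule conjunct2)
  obtain l where "l > 0" and l: "\<forall>t0\<in>\<Lambda>. \<exists>\<tau>\<in>{t0 - l..t0 + l} \<inter> \<Lambda>.
      continuous_on K (\<lambda>t. norm (g (t + \<tau>) - A (g t))) \<and> (SUP t\<in>K. norm (g (t + \<tau>) - A (g t))) \<le> \<epsilon>"
    using lev[rule_format, OF assms(2) conjI[OF assms(3,4)]] by fast
  show ?thesis
  proof (intro exI[of _ l] conjI ballI \<open>l > 0\<close>)
    fix t0
    assume "t0 \<in> \<Lambda>"
    with l obtain \<tau> where \<tau>: "\<tau> \<in> {t0 - l..t0 + l} \<inter> \<Lambda>"
      and cont: "continuous_on K (\<lambda>t. norm (g (t + \<tau>) - A (g t)))"
      and bound: "(SUP t\<in>K. norm (g (t + \<tau>) - A (g t))) \<le> \<epsilon>"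
      by fast
    show "\<exists>\<tau>\<in>{t0 - l..t0 + l} \<inter> \<Lambda>. \<forall>t\<in>K. norm (g (t + \<tau>) - A (g t)) \<le> \<epsilon>"
      using iffD1[OF SUP_le_iff_continuous_on_compact[OF assms(3,4) cont] bound] by (rule bexI[OF _ \<tau>])
  qed
qed

lemma levitan_apI:
  assumes D: "\<And>t. g t \<in> D" and g: "g \<in> bcontfun" and Ag: "(\<lambda>t. A (g t)) \<in> bcontfun"
    and approx: "\<And>\<epsilon> K. \<epsilon> > 0 \<Longrightarrow> compact K \<Longrightarrow> K \<noteq> {} \<Longrightarrow>
      \<exists>l>0. \<forall>t0\<in>\<Lambda>. \<exists>\<tau>\<in>{t0 - l..t0 + l} \<inter> \<Lambda>. \<forall>t\<in>K. norm (g (t + \<tau>) - A (g t)) \<le> \<epsilon>"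
  shows "levitan_ap \<Lambda> D A g"
  unfolding levitan_ap_def
proof (intro conjI allI impI D)
  fix \<epsilon> :: real and K :: "real set"
  assume "\<epsilon> > 0" and K: "compact K \<and> K \<noteq> {}"
  then obtain l where "l > 0" and l: "\<forall>t0\<in>\<Lambda>. \<exists>\<tau>\<in>{t0 - l..t0 + l} \<inter> \<Lambda>. \<forall>t\<in>K. norm (g (t + \<tau>) - A (g t)) \<le> \<epsilon>"
    using approx[OF \<open>\<epsilon> > 0\<close> conjunct1[OF K] conjunct2[OF K]] by fast
  have cont: "continuous_on K (\<lambda>t. norm (g (t + \<tau>) - A (g t)))" for \<tau>
    using g Ag by (rule continuous_on_norm_translate_diff)
  show "\<exists>l>0. \<forall>t0\<in>\<Lambda>. \<exists>\<tau>\<in>{t0 - l..t0 + l} \<inter> \<Lambda>.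
      continuous_on K (\<lambda>t. norm (g (t + \<tau>) - A (g t))) \<and> (SUP t\<in>K. norm (g (t + \<tau>) - A (g t))) \<le> \<epsilon>"
  proof (intro exI[of _ l] conjI ballI \<open>l > 0\<close>)
    fix t0
    assume "t0 \<in> \<Lambda>"
    with l obtain \<tau> where \<tau>: "\<tau> \<in> {t0 - l..t0 + l} \<inter> \<Lambda>" and bound: "\<forall>t\<in>K. norm (g (t + \<tau>) - A (g t)) \<le> \<epsilon>"
      by fast
    show "\<exists>\<tau>\<in>{t0 - l..t0 + l} \<inter> \<Lambda>.
        continuous_on K (\<lambda>t. norm (g (t + \<tau>) - A (g t))) \<and> (SUP t\<in>K. norm (g (t + \<tau>) - A (g t))) \<le> \<epsilon>"
      by (intro bexI[OF _ \<tau>] conjI cont iffD2[OF SUP_le_iff_continuous_on_compact[OF conjunct1[OF K] conjunct2[OF K] cont] bound])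
  qed
qed

lemma levitan_ap_imp_continuous_on_A:
  assumes lev: "levitan_ap \<Lambda> D A g" and "\<Lambda> \<noteq> {}" and g: "continuous_on UNIV g"
  shows "continuous_on UNIV (\<lambda>t. A (g t))"
proof (rule continuous_on_if_translates_approximate[OF g])
  fix K :: "real set" and \<epsilon> :: real
  assume "compact K" "K \<noteq> {}" "\<epsilon> > 0"
  moreover obtain t0 where "t0 \<in> \<Lambda>"
    using \<open>\<Lambda> \<noteq> {}\<close> by blast
  ultimately show "\<exists>\<tau>. \<forall>t\<in>K. norm (g (t + \<tau>) - A (g t)) \<le> \<epsilon>"
    using levitan_ap_approx[OF lev \<open>\<epsilon> > 0\<close> \<open>compact K\<close> \<open>K \<noteq> {}\<close>] by fast
qed

lemma bebutov_ur_approx: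
  assumes "bebutov_ur \<Lambda> D A g" "\<epsilon> > 0" "compact K" "K \<noteq> {}"
  shows "\<exists>\<tau>\<in>\<Lambda>. n \<le> \<bar>\<tau>\<bar> \<and> (\<forall>t\<in>K. norm (g (t + \<tau>) - A (g t)) \<le> \<epsilon>)"
proof -
  obtain \<tau> :: "nat \<Rightarrow> real" where \<Lambda>: "\<And>k. \<tau> k \<in> \<Lambda>" and far: "filterlim (\<lambda>k. \<bar>\<tau> k\<bar>) at_top sequentially"
    and cont: "\<And>k. continuous_on K (\<lambda>t. norm (g (t + \<tau> k) - A (g t)))"
    and lim: "(\<lambda>k. SUP t\<in>K. norm (g (t + \<tau> k) - A (g t))) \<longlonglongrightarrow> 0"
    using assms(1)[unfolded bebutov_ur_def, THEN conjunct2, rule_format, OF conjI[OF assms(3,4)]]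
    by fast
  have "\<forall>\<^sub>F k in sequentially. n \<le> \<bar>\<tau> k\<bar>"
    using far by (simp add: filterlim_at_top)
  moreover have "\<forall>\<^sub>F k in sequentially. (SUP t\<in>K. norm (g (t + \<tau> k) - A (g t))) < \<epsilon>"
    using lim \<open>\<epsilon> > 0\<close> by (rule order_tendstoD(2))
  ultimately have "\<forall>\<^sub>F k in sequentially. n \<le> \<bar>\<tau> k\<bar> \<and> (SUP t\<in>K. norm (g (t + \<tau> k) - A (g t))) < \<epsilon>"
    by (rule eventually_conj)
  then obtain N where "\<And>k. k \<ge> N \<Longrightarrow> n \<le> \<bar>\<tau> k\<bar> \<and> (SUP t\<in>K. norm (g (t + \<tau> k) - A (g t))) < \<epsilon>"
    unfolding eventually_sequentially by fast
  then have "n \<le> \<bar>\<tau> N\<bar>" "(SUP t\<in>K. norm (g (t + \<tau> N) - A (g t))) \<le> \<epsilon>"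
    by (simp_all add: less_imp_le)
  then show ?thesis
    using iffD1[OF SUP_le_iff_continuous_on_compact[OF assms(3,4) cont]] by (intro bexI[OF _ \<Lambda>[of N]]) simp
qed

lemma bebutov_urI:
  assumes D: "\<And>t. g t \<in> D" and g: "g \<in> bcontfun" and Ag: "(\<lambda>t. A (g t)) \<in> bcontfun"
    and approx: "\<And>\<epsilon> n K. \<epsilon> > 0 \<Longrightarrow> compact K \<Longrightarrow> K \<noteq> {} \<Longrightarrow>
      \<exists>\<tau>\<in>\<Lambda>. n \<le> \<bar>\<tau>\<bar> \<and> (\<forall>t\<in>K. norm (g (t + \<tau>) - A (g t)) \<le> \<epsilon>)"
  shows "bebutov_ur \<Lambda> D A g"
  unfolding bebutov_ur_def
proof (intro conjI allI impI D)
  fix K :: "real set"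
  assume K: "compact K \<and> K \<noteq> {}"
  then have "\<exists>\<tau>\<in>\<Lambda>. real k \<le> \<bar>\<tau>\<bar> \<and> (\<forall>t\<in>K. norm (g (t + \<tau>) - A (g t)) \<le> inverse (real (Suc k)))" for k
    by (intro approx) auto
  then have "\<forall>k. \<exists>\<tau>. \<tau> \<in> \<Lambda> \<and> real k \<le> \<bar>\<tau>\<bar> \<and> (\<forall>t\<in>K. norm (g (t + \<tau>) - A (g t)) \<le> inverse (real (Suc k)))"
    by fast
  then obtain \<tau> where \<tau>: "\<And>k. \<tau> k \<in> \<Lambda>" "\<And>k. real k \<le> \<bar>\<tau> k\<bar>"
    "\<And>k t. t \<in> K \<Longrightarrow> norm (g (t + \<tau> k) - A (g t)) \<le> inverse (real (Suc k))"
    using choice[of "\<lambda>k \<tau>. \<tau> \<in> \<Lambda> \<and> real k \<le> \<bar>\<tau>\<bar> \<and> (\<forall>t\<in>K. norm (g (t + \<tau>) - A (g t)) \<le> inverse (real (Suc k)))"]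
    by fast
  have cont: "continuous_on K (\<lambda>t. norm (g (t + \<tau> k) - A (g t)))" for k
    using g Ag by (rule continuous_on_norm_translate_diff)
  have lim: "(\<lambda>k. SUP t\<in>K. norm (g (t + \<tau> k) - A (g t))) \<longlonglongrightarrow> 0"
  proof (rule tendsto_sandwich[OF _ _ tendsto_const LIMSEQ_inverse_real_of_nat])
    obtain t0 where "t0 \<in> K"
      using K by blast
    have "bdd_above ((\<lambda>t. norm (g (t + \<tau> k) - A (g t))) ` K)" for k
      using K cont by (intro bounded_imp_bdd_above compact_imp_bounded compact_continuous_image) auto
    then show "\<forall>\<^sub>F k in sequentially. 0 \<le> (SUP t\<in>K. norm (g (t + \<tau> k) - A (g t)))"
      using \<open>t0 \<in> K\<close> by (intro always_eventually allI cSUP_upper2) auto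
    show "\<forall>\<^sub>F k in sequentially. (SUP t\<in>K. norm (g (t + \<tau> k) - A (g t))) \<le> inverse (real (Suc k))"
      using K \<tau>(3) by (intro always_eventually allI iffD2[OF SUP_le_iff_continuous_on_compact[OF _ _ cont]]) auto
  qed
  have far: "filterlim (\<lambda>k. \<bar>\<tau> k\<bar>) at_top sequentially"
    using \<tau>(2) by (intro filterlim_at_top_mono[OF filterlim_real_sequentially always_eventually]) auto
  show "\<exists>\<tau>::nat \<Rightarrow> real. (\<forall>k. \<tau> k \<in> \<Lambda>) \<and> filterlim (\<lambda>k. \<bar>\<tau> k\<bar>) at_top sequentially \<and>
      (\<forall>k. continuous_on K (\<lambda>t. norm (g (t + \<tau> k) - A (g t)))) \<and>
      (\<lambda>k. SUP t\<in>K. norm (g (t + \<tau> k) - A (g t))) \<longlonglongrightarrow> 0"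
    by (intro exI[of _ \<tau>] conjI allI \<tau>(1) cont lim far)
qed

lemma bebutov_ur_imp_continuous_on_A:
  assumes beb: "bebutov_ur \<Lambda> D A g" and g: "continuous_on UNIV g"
  shows "continuous_on UNIV (\<lambda>t. A (g t))"
proof (rule continuous_on_if_translates_approximate[OF g])
  fix K :: "real set" and \<epsilon> :: real
  assume "compact K" "K \<noteq> {}" "\<epsilon> > 0"
  then show "\<exists>\<tau>. \<forall>t\<in>K. norm (g (t + \<tau>) - A (g t)) \<le> \<epsilon>"
    using bebutov_ur_approx[OF beb \<open>\<epsilon> > 0\<close> \<open>compact K\<close> \<open>K \<noteq> {}\<close>] by fast
qed

section \<open>Convolution with an integrable operator family\<close>

lemma eventually_mem_Icc_inverse_Suc:
  fixes r :: real
  assumes "r > 0"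
  shows "eventually (\<lambda>n. r \<in> {inverse (real (Suc n)) .. real (Suc n)}) sequentially"
proof -
  obtain N where "r \<le> real N"
    using real_arch_simple by blast
  then have "eventually (\<lambda>n. r \<le> real (Suc n)) sequentially"
    unfolding eventually_sequentially by (intro exI[of _ N]) auto
  moreover have "eventually (\<lambda>n. inverse (real (Suc n)) < r) sequentially"
    using order_tendstoD(2)[OF LIMSEQ_inverse_real_of_nat assms] .
  ultimately show ?thesis
    by eventually_elim auto
qed

lemma tendsto_integral_outside_Icc_inverse_Suc:
  fixes h :: "real \<Rightarrow> real"
  assumes h: "h integrable_on {0<..}" and nonneg: "\<And>r. r > 0 \<Longrightarrow> 0 \<le> h r"
  defines "k \<equiv> \<lambda>n r. if r \<in> {inverse (real (Suc n)) .. real (Suc n)} then 0 else h r"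
  shows "k n integrable_on {0<..}" and "(\<lambda>n. integral {0<..} (k n)) \<longlonglongrightarrow> 0"
proof -
  define I where "I n = {inverse (real (Suc n)) .. real (Suc n)}" for n
  have "(\<lambda>r. if r \<in> I n then h r else 0) integrable_on {0<..}" for n
  proof -
    have sub: "I n \<subseteq> {0<..}"
      by (auto simp: I_def less_le_trans[of 0 "inverse (real (Suc n))"])
    then have "h integrable_on I n"
      unfolding I_def by (intro integrable_on_subinterval[OF h]) (simp add: I_def)
    then show ?thesis
      unfolding integrable_restrict_Int Int_absorb2[OF sub] .
  qed
  moreover have "k n = (\<lambda>r. h r - (if r \<in> I n then h r else 0))" for n
    by (auto simp: k_def I_def)
  ultimately show k: "k n integrable_on {0<..}" for n
    using h by (simp add: integrable_diff)
  have "(\<lambda>n. integral {0<..} (k n)) \<longlonglongrightarrow> integral {0<..} (\<lambda>r::real. 0)"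
  proof (rule dominated_convergence(2)[OF k h])
    show "norm (k n r) \<le> h r" if "r \<in> {0<..}" for n r
      using that nonneg[of r] by (simp add: k_def)
    show "(\<lambda>n. k n r) \<longlonglongrightarrow> 0" if "r \<in> {0<..}" for r
    proof (rule tendsto_eventually)
      have "r > 0"
        using that by simp
      show "\<forall>\<^sub>F n in sequentially. k n r = 0"
        using eventually_mem_Icc_inverse_Suc[OF \<open>r > 0\<close>] by (rule eventually_mono) (simp add: k_def)
    qed
  qed
  then show "(\<lambda>n. integral {0<..} (k n)) \<longlonglongrightarrow> 0"
    by simp
qed

locale integrable_operator_family =
  fixes R :: "real \<Rightarrow> 'x::banach \<Rightarrow> 'x"
  assumes bounded_linear_R: "\<And>t. t > 0 \<Longrightarrow> bounded_linear (R t)"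
    and strongly_continuous: "\<And>x. continuous_on {0<..} (\<lambda>t. R t x)"
    and integrable_onorm: "(\<lambda>t. onorm (R t)) integrable_on {0<..}"
begin

lemma norm_R_le: "t > 0 \<Longrightarrow> norm (R t x) \<le> onorm (R t) * norm x"
  by (rule onorm[OF bounded_linear_R])

lemma onorm_R_nonneg: "t > 0 \<Longrightarrow> 0 \<le> onorm (R t)"
  by (rule onorm_pos_le[OF bounded_linear_R])

lemma R_diff: "t > 0 \<Longrightarrow> R t (x - y) = R t x - R t y"
  by (simp add: bounded_linear_R linear_diff bounded_linear.linear)

lemma R_zero: "t > 0 \<Longrightarrow> R t 0 = 0"
  by (simp add: bounded_linear_R linear_0 bounded_linear.linear)

lemma continuous_on_R_apply:
  assumes w: "continuous_on {0<..} w"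
  shows "continuous_on {0<..} (\<lambda>r. R r (w r))"
proof -
  have "isCont (\<lambda>r. R r (w r)) r0" if "r0 > 0" for r0
  proof -
    have "bounded ((\<lambda>r. R r x) ` {r0/2..2*r0})" for x
      using \<open>r0 > 0\<close> by (intro compact_imp_bounded compact_continuous_image
          continuous_on_subset[OF strongly_continuous]) auto
    then obtain B where B: "\<And>r x. r \<in> {r0/2..2*r0} \<Longrightarrow> norm (R r x) \<le> B * norm x"
      using uniform_boundedness[of "{r0/2..2*r0}" R] \<open>r0 > 0\<close> bounded_linear_R by force
    have near: "eventually (\<lambda>r. r \<in> {r0/2<..<2*r0}) (at r0)"
      using \<open>r0 > 0\<close> by (intro eventually_at_in_open') auto
    have w0: "(w \<longlongrightarrow> w r0) (at r0)" and R0: "((\<lambda>r. R r (w r0)) \<longlongrightarrow> R r0 (w r0)) (at r0)"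
      using w strongly_continuous \<open>r0 > 0\<close> by (auto simp: continuous_on_eq_continuous_at isCont_def)
    have "((\<lambda>r. R r (w r) - R r0 (w r0)) \<longlongrightarrow> 0) (at r0)"
    proof (rule Lim_null_comparison)
      show "eventually (\<lambda>r. norm (R r (w r) - R r0 (w r0))
          \<le> B * norm (w r - w r0) + norm (R r (w r0) - R r0 (w r0))) (at r0)"
        using near
      proof eventually_elim
        case (elim r)
        then have "R r (w r) - R r0 (w r0) = R r (w r - w r0) + (R r (w r0) - R r0 (w r0))"
          using \<open>r0 > 0\<close> by (simp add: R_diff)
        then have "norm (R r (w r) - R r0 (w r0))
            \<le> norm (R r (w r - w r0)) + norm (R r (w r0) - R r0 (w r0))"
          by (metis norm_triangle_ineq)
        then show ?case
          using B[of r "w r - w r0"] elim by auto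
      qed
      show "((\<lambda>r. B * norm (w r - w r0) + norm (R r (w r0) - R r0 (w r0))) \<longlongrightarrow> 0) (at r0)"
        using w0 R0 by (intro tendsto_add_zero tendsto_mult_right_zero tendsto_norm_zero)
          (simp_all add: LIM_zero_iff)
    qed
    then show ?thesis
      by (simp add: isCont_def LIM_zero_iff)
  qed
  then show ?thesis
    by (intro continuous_at_imp_continuous_on) auto
qed

lemma integrable_onorm_mult_norm:
  fixes u :: "real \<Rightarrow> 'y::real_normed_vector"
  assumes u: "continuous_on {0<..} u" and M: "\<And>r. r > 0 \<Longrightarrow> norm (u r) \<le> M"
  shows "(\<lambda>r. onorm (R r) * norm (u r)) integrable_on {0<..}"
proof -
  have "(\<lambda>r. norm (u r) * onorm (R r)) absolutely_integrable_on {0<..}"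
  proof (rule absolutely_integrable_bounded_measurable_product_real)
    show "(\<lambda>r. norm (u r)) \<in> borel_measurable (lebesgue_on {0<..})"
      using u by (intro continuous_imp_measurable_on_sets_lebesgue continuous_on_norm) auto
    show "bounded ((\<lambda>r. norm (u r)) ` {0<..})"
      using M by (auto simp: bounded_iff)
    show "(\<lambda>r. onorm (R r)) absolutely_integrable_on {0<..}"
      using integrable_onorm onorm_R_nonneg by (intro nonnegative_absolutely_integrable_1) auto
  qed auto
  then show ?thesis
    by (simp add: absolutely_integrable_on_def mult.commute)
qed

lemma integrable_R_apply:
  assumes w: "continuous_on {0<..} w" and M: "\<And>r. r > 0 \<Longrightarrow> norm (w r) \<le> M"
  shows "(\<lambda>r. R r (w r)) integrable_on {0<..}"
proof (rule integrable_on_approx)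
  let ?h = "\<lambda>r. onorm (R r) * norm (w r)"
  show h: "?h integrable_on {0<..}"
    using w M by (rule integrable_onorm_mult_norm)
  show "norm (R r (w r)) \<le> ?h r" if "r \<in> {0<..}" for r
    using that by (simp add: norm_R_le)
  \<comment> \<open>Approximate by the truncations to \<open>I n\<close>, where the integrand is continuous; the error is
    controlled by the integrable real majorant \<open>?h\<close>.\<close>
  define I where "I n = {inverse (real (Suc n)) .. real (Suc n)}" for n
  have "0 \<le> ?h r" if "r > 0" for r
    using that by (simp add: onorm_R_nonneg)
  note tail = tendsto_integral_outside_Icc_inverse_Suc[OF h this, folded I_def]
  fix e :: real
  assume "e > 0"
  have "\<forall>\<^sub>F n in sequentially. integral {0<..} (\<lambda>r. if r \<in> I n then 0 else ?h r) < e"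
    by (rule order_tendstoD(2)[OF tail(2) \<open>e > 0\<close>])
  then obtain n where small: "integral {0<..} (\<lambda>r. if r \<in> I n then 0 else ?h r) < e"
    by (auto simp: eventually_sequentially)
  have "I n \<subseteq> {0<..}"
    by (auto simp: I_def less_le_trans[of 0 "inverse (real (Suc n))"])
  then have "continuous_on (I n) (\<lambda>r. R r (w r))"
    by (intro continuous_on_subset[OF continuous_on_R_apply[OF w]])
  then have "(\<lambda>r. R r (w r)) integrable_on I n"
    unfolding I_def by (rule integrable_continuous_interval)
  then have g: "(\<lambda>r. if r \<in> I n then R r (w r) else 0) integrable_on {0<..}"
    unfolding integrable_restrict_Int Int_absorb2[OF \<open>I n \<subseteq> {0<..}\<close>] .
  show "\<exists>g k. g integrable_on {0<..} \<and> k integrable_on {0<..} \<and>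
      (\<forall>r\<in>{0<..}. norm (R r (w r) - g r) \<le> k r) \<and> integral {0<..} k < e"
    using g tail(1)[of n] small norm_R_le onorm_R_nonneg by (intro exI conjI) auto
qed

lemma norm_integral_R_apply_le:
  assumes w: "continuous_on {0<..} w" and M: "\<And>r. r > 0 \<Longrightarrow> norm (w r) \<le> M"
  shows "norm (integral {0<..} (\<lambda>r. R r (w r))) \<le> integral {0<..} (\<lambda>r. onorm (R r) * norm (w r))"
  using integrable_R_apply[OF w M] integrable_onorm_mult_norm[OF w M]
  by (rule integral_norm_bound_integral) (auto intro: norm_R_le)

lemma integral_R_apply_diff:
  assumes "continuous_on {0<..} v" "\<And>r. r > 0 \<Longrightarrow> norm (v r) \<le> M"
    and "continuous_on {0<..} w" "\<And>r. r > 0 \<Longrightarrow> norm (w r) \<le> N"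
  shows "integral {0<..} (\<lambda>r. R r (v r)) - integral {0<..} (\<lambda>r. R r (w r))
       = integral {0<..} (\<lambda>r. R r (v r - w r))"
proof -
  have "integral {0<..} (\<lambda>r. R r (v r)) - integral {0<..} (\<lambda>r. R r (w r))
      = integral {0<..} (\<lambda>r. R r (v r) - R r (w r))"
    using integrable_R_apply[OF assms(1,2)] integrable_R_apply[OF assms(3,4)] by (rule integral_diff[symmetric])
  also have "\<dots> = integral {0<..} (\<lambda>r. R r (v r - w r))"
    by (intro integral_cong) (simp add: R_diff)
  finally show ?thesis .
qed

lemma tendsto_integral_R_apply:
  assumes w: "\<And>n. continuous_on {0<..} (w n)" "\<And>n r. r > 0 \<Longrightarrow> norm (w n r) \<le> M"
    and v: "continuous_on {0<..} v" "\<And>r. r > 0 \<Longrightarrow> norm (v r) \<le> M"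
    and lim: "\<And>r. r > 0 \<Longrightarrow> (\<lambda>n. w n r) \<longlonglongrightarrow> v r"
  shows "(\<lambda>n. integral {0<..} (\<lambda>r. R r (w n r))) \<longlonglongrightarrow> integral {0<..} (\<lambda>r. R r (v r))"
proof -
  have diff_cont: "continuous_on {0<..} (\<lambda>r. w n r - v r)" for n
    using w(1) v(1) by (rule continuous_on_diff)
  have diff_bound: "norm (w n r - v r) \<le> 2 * M" if "r > 0" for n r
    using w(2)[of r n] v(2)[of r] that norm_triangle_ineq4[of "w n r" "v r"] by linarith
  let ?d = "\<lambda>n r. onorm (R r) * norm (w n r - v r)"
  have "(\<lambda>n. integral {0<..} (?d n)) \<longlonglongrightarrow> integral {0<..} (\<lambda>r::real. 0)"
  proof (rule dominated_convergence(2))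
    show "?d n integrable_on {0<..}" for n
      using diff_cont diff_bound by (rule integrable_onorm_mult_norm)
    show "(\<lambda>r. onorm (R r) * (2 * M)) integrable_on {0<..}"
      using integrable_onorm by (rule integrable_on_mult_left)
    show "norm (?d n r) \<le> onorm (R r) * (2 * M)" if "r \<in> {0<..}" for n r
      using that diff_bound[of r n] onorm_R_nonneg[of r] by (simp add: mult_left_mono)
    show "(\<lambda>n. ?d n r) \<longlonglongrightarrow> 0" if "r \<in> {0<..}" for r
      using lim[of r] that by (intro tendsto_mult_right_zero tendsto_norm_zero) (simp add: LIM_zero_iff)
  qed
  then have d: "(\<lambda>n. integral {0<..} (?d n)) \<longlonglongrightarrow> 0"
    by simp
  have bound: "norm (integral {0<..} (\<lambda>r. R r (w n r)) - integral {0<..} (\<lambda>r. R r (v r)))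
      \<le> integral {0<..} (?d n)" for n
  proof -
    have "integral {0<..} (\<lambda>r. R r (w n r)) - integral {0<..} (\<lambda>r. R r (v r))
        = integral {0<..} (\<lambda>r. R r (w n r - v r))"
      using w v by (rule integral_R_apply_diff)
    also have "norm \<dots> \<le> integral {0<..} (?d n)"
      using diff_cont diff_bound by (rule norm_integral_R_apply_le)
    finally show ?thesis .
  qed
  have "(\<lambda>n. integral {0<..} (\<lambda>r. R r (w n r)) - integral {0<..} (\<lambda>r. R r (v r))) \<longlonglongrightarrow> 0"
    by (rule Lim_null_comparison[OF always_eventually[OF allI[OF bound]] d])
  then show ?thesis
    by (simp add: LIM_zero_iff)
qed

definition convolution :: "(real \<Rightarrow> 'x) \<Rightarrow> real \<Rightarrow> 'x" where
  "convolution y t = integral {0<..} (\<lambda>r. R r (y (t - r)))"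

lemma has_integral_convolution_halfline:
  assumes y: "y \<in> bcontfun"
  shows "((\<lambda>r. R r (y (t - r))) has_integral convolution y t) {0<..}"
proof -
  obtain M where "\<And>s. norm (y s) \<le> M"
    using bcontfun_bound[OF y] by blast
  then show ?thesis
    unfolding convolution_def using continuous_on_reflect_bcontfun[OF y]
    by (intro integrable_integral integrable_R_apply)
qed

lemma has_integral_convolution:
  assumes "y \<in> bcontfun"
  shows "((\<lambda>s. R (t - s) (y s)) has_integral convolution y t) {..<t}"
  using has_integral_reflect_shift[OF has_integral_convolution_halfline[OF assms, of t], of t] by simp

lemma convolution_bcontfun:
  assumes y: "y \<in> bcontfun"
  shows "convolution y \<in> bcontfun"
proof -
  obtain M where M: "\<And>s. norm (y s) \<le> M"
    using bcontfun_bound[OF y] by blast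
  have "norm (convolution y t) \<le> integral {0<..} (\<lambda>r. onorm (R r) * M)" for t
    unfolding convolution_def
  proof (rule integral_norm_bound_integral)
    show "(\<lambda>r. R r (y (t - r))) integrable_on {0<..}"
      using continuous_on_reflect_bcontfun[OF y] M by (rule integrable_R_apply)
    show "(\<lambda>r. onorm (R r) * M) integrable_on {0<..}"
      using integrable_onorm by (rule integrable_on_mult_left)
    show "norm (R r (y (t - r))) \<le> onorm (R r) * M" if "r \<in> {0<..}" for r
    proof -
      have "norm (R r (y (t - r))) \<le> onorm (R r) * norm (y (t - r))"
        using that by (simp add: norm_R_le)
      also have "\<dots> \<le> onorm (R r) * M"
        using that M onorm_R_nonneg by (simp add: mult_left_mono)
      finally show ?thesis .
    qed
  qed
  then have "bounded (range (convolution y))"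
    by (auto simp: bounded_iff)
  moreover have "isCont (convolution y) t" for t
  proof (rule continuous_at_sequentiallyI)
    fix u
    assume "u \<longlonglongrightarrow> t"
    have "isCont y x" for x
      using y by (simp add: bcontfun_def continuous_on_eq_continuous_at)
    moreover have "(\<lambda>n. u n - r) \<longlonglongrightarrow> t - r" for r
      using \<open>u \<longlonglongrightarrow> t\<close> by (intro tendsto_diff tendsto_const)
    ultimately have "(\<lambda>n. y (u n - r)) \<longlonglongrightarrow> y (t - r)" for r
      by (rule isCont_tendsto_compose)
    then show "(\<lambda>n. convolution y (u n)) \<longlonglongrightarrow> convolution y t"
      unfolding convolution_def using continuous_on_reflect_bcontfun[OF y] M
      by (intro tendsto_integral_R_apply)
  qed
  ultimately show ?thesis
    by (simp add: bcontfun_def continuous_at_imp_continuous_on)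
qed

lemma convolution_diff:
  assumes "y \<in> bcontfun" "z \<in> bcontfun"
  shows "convolution y t - convolution z t = convolution (\<lambda>s. y s - z s) t"
proof -
  obtain M N where "\<And>s. norm (y s) \<le> M" "\<And>s. norm (z s) \<le> N"
    using assms by (meson bcontfun_bound)
  then show ?thesis
    unfolding convolution_def using continuous_on_reflect_bcontfun assms
    by (intro integral_R_apply_diff)
qed

lemma convolution_shift: "convolution y (t + \<tau>) = convolution (\<lambda>s. y (s + \<tau>)) t"
  by (simp add: convolution_def algebra_simps)

lemma tendsto_convolution_zero:
  assumes u: "\<And>n. u n \<in> bcontfun" "\<And>n s. norm (u n s) \<le> M"
    and small: "\<And>n s. s \<in> {- m - real (Suc n) .. m - inverse (real (Suc n))} \<Longrightarrow>
      norm (u n s) \<le> inverse (real (Suc n))"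
    and t: "\<And>n. \<bar>t n\<bar> \<le> m"
  shows "(\<lambda>n. convolution (u n) (t n)) \<longlonglongrightarrow> 0"
proof -
  have "0 \<le> M"
    using u(2)[of 0 0] norm_ge_zero order_trans by blast
  have "(\<lambda>n. convolution (u n) (t n)) \<longlonglongrightarrow> integral {0<..} (\<lambda>r. R r 0)"
    unfolding convolution_def
  proof (rule tendsto_integral_R_apply)
    show "continuous_on {0<..} (\<lambda>r. u n (t n - r))" for n
      using u(1) by (rule continuous_on_reflect_bcontfun)
    show "(\<lambda>n. u n (t n - r)) \<longlonglongrightarrow> 0" if "r > 0" for r
    proof (rule Lim_null_comparison[OF _ LIMSEQ_inverse_real_of_nat])
      show "\<forall>\<^sub>F n in sequentially. norm (u n (t n - r)) \<le> inverse (real (Suc n))"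
        using eventually_mem_Icc_inverse_Suc[OF that]
      proof eventually_elim
        case (elim n)
        then show ?case
          using t[of n] by (intro small) auto
      qed
    qed
  qed (use u(2) \<open>0 \<le> M\<close> in auto)
  moreover have "integral {0<..} (\<lambda>r. R r 0) = integral {0<..} (\<lambda>r::real. 0::'x)"
    by (rule integral_cong) (simp add: R_zero)
  ultimately show ?thesis
    by simp
qed

lemma convolution_local_estimate:
  assumes "compact K" "\<epsilon> > 0"
  obtains K' \<delta> where "compact K'" "K' \<noteq> {}" "\<delta> > 0"
    "\<And>u t. u \<in> bcontfun \<Longrightarrow> (\<And>s. norm (u s) \<le> M) \<Longrightarrow> (\<And>s. s \<in> K' \<Longrightarrow> norm (u s) \<le> \<delta>) \<Longrightarrow>
      t \<in> K \<Longrightarrow> norm (convolution u t) \<le> \<epsilon>"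
proof -
  obtain m where "m > 0" and m: "\<And>t. t \<in> K \<Longrightarrow> \<bar>t\<bar> \<le> m"
    using compact_imp_bounded[OF \<open>compact K\<close>] by (auto simp: bounded_pos)
  \<comment> \<open>\<open>K' n\<close> contains \<open>t - r\<close> for all \<open>t \<in> K\<close> and \<open>r \<in> {1 / (n + 1) .. n + 1}\<close>.\<close>
  define K' where "K' n = {- m - real (Suc n) .. m - inverse (real (Suc n))}" for n
  have "\<exists>n. \<forall>u t. u \<in> bcontfun \<and> (\<forall>s. norm (u s) \<le> M) \<and> (\<forall>s\<in>K' n. norm (u s) \<le> inverse (real (Suc n)))
      \<and> t \<in> K \<longrightarrow> norm (convolution u t) \<le> \<epsilon>"
  proof (rule ccontr)
    assume "\<not> ?thesis"
    then have "\<forall>n. \<exists>u t. u \<in> bcontfun \<and> (\<forall>s. norm (u s) \<le> M) \<and>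
        (\<forall>s\<in>K' n. norm (u s) \<le> inverse (real (Suc n))) \<and> t \<in> K \<and> \<epsilon> < norm (convolution u t)"
      by (auto simp: not_le)
    then obtain u t where u: "\<And>n. u n \<in> bcontfun" "\<And>n s. norm (u n s) \<le> M"
      "\<And>n s. s \<in> K' n \<Longrightarrow> norm (u n s) \<le> inverse (real (Suc n))"
      and t: "\<And>n. t n \<in> K" and big: "\<And>n. \<epsilon> < norm (convolution (u n) (t n))"
      by metis
    have "(\<lambda>n. convolution (u n) (t n)) \<longlonglongrightarrow> 0"
      using u(1,2) u(3)[unfolded K'_def] m[OF t] by (rule tendsto_convolution_zero)
    then have "(\<lambda>n. norm (convolution (u n) (t n))) \<longlonglongrightarrow> 0"
      by (rule tendsto_norm_zero)
    then have "\<forall>\<^sub>F n in sequentially. norm (convolution (u n) (t n)) < \<epsilon>"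
      using \<open>\<epsilon> > 0\<close> by (rule order_tendstoD(2))
    then obtain N where "\<And>n. n \<ge> N \<Longrightarrow> norm (convolution (u n) (t n)) < \<epsilon>"
      unfolding eventually_sequentially by blast
    then show False
      using big[of N] by fastforce
  qed
  then obtain n where n: "\<And>u t. u \<in> bcontfun \<Longrightarrow> (\<And>s. norm (u s) \<le> M) \<Longrightarrow>
      (\<And>s. s \<in> K' n \<Longrightarrow> norm (u s) \<le> inverse (real (Suc n))) \<Longrightarrow> t \<in> K \<Longrightarrow> norm (convolution u t) \<le> \<epsilon>"
    by blast
  have "K' n \<noteq> {}"
    using \<open>m > 0\<close> inverse_le_1_iff[of "real (Suc n)"] by (simp add: K'_def)
  with n show thesis
    by (intro that[of "K' n" "inverse (real (Suc n))"]) (simp_all add: K'_def)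
qed

end

locale commuting_integrable_operator_family = integrable_operator_family R
  for R :: "real \<Rightarrow> 'x::banach \<Rightarrow> 'x" +
  fixes D :: "'x set" and A :: "'x \<Rightarrow> 'x"
  assumes closed_A: "closed_linear_operator D A"
    and commute: "\<And>t x. t > 0 \<Longrightarrow> x \<in> D \<Longrightarrow> R t x \<in> D \<and> A (R t x) = R t (A x)"
begin

lemma convolution_in_domain:
  assumes y: "y \<in> bcontfun" and Ay: "(\<lambda>s. A (y s)) \<in> bcontfun" and D: "\<And>s. y s \<in> D"
  shows "convolution y t \<in> D \<and> A (convolution y t) = convolution (\<lambda>s. A (y s)) t"
proof (rule has_integral_closed_linear_operator[OF closed_A has_integral_convolution_halfline[OF y]])
  have "((\<lambda>r. R r (A (y (t - r)))) has_integral convolution (\<lambda>s. A (y s)) t) {0<..}"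
    using has_integral_convolution_halfline[OF Ay] .
  then show "((\<lambda>r. A (R r (y (t - r)))) has_integral convolution (\<lambda>s. A (y s)) t) {0<..}"
    by (rule has_integral_eq[rotated]) (simp add: commute D)
  show "R r (y (t - r)) \<in> D" if "r \<in> {0<..}" for r
    using that commute D by simp
qed

lemma convolution_translate_estimate:
  assumes f: "f \<in> bcontfun" and Af: "(\<lambda>s. A (f s)) \<in> bcontfun" and D: "\<And>s. f s \<in> D"
    and "compact K" "\<epsilon> > 0"
  obtains K' \<delta> where "compact K'" "K' \<noteq> {}" "\<delta> > 0"
    "\<And>\<tau> t. (\<And>s. s \<in> K' \<Longrightarrow> norm (f (s + \<tau>) - A (f s)) \<le> \<delta>) \<Longrightarrow> t \<in> K \<Longrightarrow>
      norm (convolution f (t + \<tau>) - A (convolution f t)) \<le> \<epsilon>"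
proof -
  obtain M N where M: "\<And>s. norm (f s) \<le> M" and N: "\<And>s. norm (A (f s)) \<le> N"
    using bcontfun_bound[OF f] bcontfun_bound[OF Af] by metis
  obtain K' \<delta> where K': "compact K'" "K' \<noteq> {}" "\<delta> > 0" and estimate: "\<And>u t. u \<in> bcontfun \<Longrightarrow>
      (\<And>s. norm (u s) \<le> M + N) \<Longrightarrow> (\<And>s. s \<in> K' \<Longrightarrow> norm (u s) \<le> \<delta>) \<Longrightarrow> t \<in> K \<Longrightarrow> norm (convolution u t) \<le> \<epsilon>"
    using convolution_local_estimate[OF \<open>compact K\<close> \<open>\<epsilon> > 0\<close>, of "M + N"] by blast
  show thesis
  proof (rule that[OF K'])
    fix \<tau> t
    assume close: "\<And>s. s \<in> K' \<Longrightarrow> norm (f (s + \<tau>) - A (f s)) \<le> \<delta>" and "t \<in> K"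
    have "convolution f (t + \<tau>) - A (convolution f t) = convolution (\<lambda>s. f (s + \<tau>)) t - convolution (\<lambda>s. A (f s)) t"
      using convolution_in_domain[OF f Af D] by (simp add: convolution_shift)
    also have "\<dots> = convolution (\<lambda>s. f (s + \<tau>) - A (f s)) t"
      using bcontfun_shift[OF f] Af by (rule convolution_diff)
    also have "norm \<dots> \<le> \<epsilon>"
    proof (rule estimate[OF minus_cont[OF bcontfun_shift[OF f] Af] _ close \<open>t \<in> K\<close>])
      show "norm (f (s + \<tau>) - A (f s)) \<le> M + N" for s
        using M[of "s + \<tau>"] N[of s] norm_triangle_ineq4[of "f (s + \<tau>)" "A (f s)"] by linarith
    qed
    finally show "norm (convolution f (t + \<tau>) - A (convolution f t)) \<le> \<epsilon>" .
  qed
qed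

lemma levitan_ap_convolution:
  assumes f: "f \<in> bcontfun" and Af: "(\<lambda>s. A (f s)) \<in> bcontfun" and lev: "levitan_ap \<Lambda> D A f"
  shows "levitan_ap \<Lambda> D A (convolution f)"
proof -
  have D: "\<And>s. f s \<in> D"
    using lev by (simp add: levitan_ap_def)
  show ?thesis
  proof (rule levitan_apI)
    show "convolution f t \<in> D" for t
      using convolution_in_domain[OF f Af D] by simp
    show "convolution f \<in> bcontfun"
      using f by (rule convolution_bcontfun)
    show "(\<lambda>t. A (convolution f t)) \<in> bcontfun"
      using convolution_in_domain[OF f Af D] convolution_bcontfun[OF Af] by simp
    fix \<epsilon> :: real and K :: "real set"
    assume "\<epsilon> > 0" "compact K" "K \<noteq> {}"
    then obtain K' \<delta> where K': "compact K'" "K' \<noteq> {}" "\<delta> > 0" and estimate: "\<And>\<tau> t.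
        (\<And>s. s \<in> K' \<Longrightarrow> norm (f (s + \<tau>) - A (f s)) \<le> \<delta>) \<Longrightarrow> t \<in> K \<Longrightarrow>
        norm (convolution f (t + \<tau>) - A (convolution f t)) \<le> \<epsilon>"
      using convolution_translate_estimate[OF f Af D] by metis
    obtain l where "l > 0" and l: "\<forall>t0\<in>\<Lambda>. \<exists>\<tau>\<in>{t0 - l..t0 + l} \<inter> \<Lambda>. \<forall>s\<in>K'. norm (f (s + \<tau>) - A (f s)) \<le> \<delta>"
      using levitan_ap_approx[OF lev \<open>\<delta> > 0\<close> K'(1,2)] by fast
    show "\<exists>l>0. \<forall>t0\<in>\<Lambda>. \<exists>\<tau>\<in>{t0 - l..t0 + l} \<inter> \<Lambda>. \<forall>t\<in>K. norm (convolution f (t + \<tau>) - A (convolution f t)) \<le> \<epsilon>"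
      using \<open>l > 0\<close> l estimate by fast
  qed
qed

lemma bebutov_ur_convolution:
  assumes f: "f \<in> bcontfun" and Af: "(\<lambda>s. A (f s)) \<in> bcontfun" and beb: "bebutov_ur \<Lambda> D A f"
  shows "bebutov_ur \<Lambda> D A (convolution f)"
proof -
  have D: "\<And>s. f s \<in> D"
    using beb by (simp add: bebutov_ur_def)
  show ?thesis
  proof (rule bebutov_urI)
    show "convolution f t \<in> D" for t
      using convolution_in_domain[OF f Af D] by simp
    show "convolution f \<in> bcontfun"
      using f by (rule convolution_bcontfun)
    show "(\<lambda>t. A (convolution f t)) \<in> bcontfun"
      using convolution_in_domain[OF f Af D] convolution_bcontfun[OF Af] by simp
    fix \<epsilon> n :: real and K :: "real set"
    assume "\<epsilon> > 0" "compact K" "K \<noteq> {}"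
    then obtain K' \<delta> where K': "compact K'" "K' \<noteq> {}" "\<delta> > 0" and estimate: "\<And>\<tau> t.
        (\<And>s. s \<in> K' \<Longrightarrow> norm (f (s + \<tau>) - A (f s)) \<le> \<delta>) \<Longrightarrow> t \<in> K \<Longrightarrow>
        norm (convolution f (t + \<tau>) - A (convolution f t)) \<le> \<epsilon>"
      using convolution_translate_estimate[OF f Af D] by metis
    obtain \<tau> where "\<tau> \<in> \<Lambda>" "n \<le> \<bar>\<tau>\<bar>" "\<forall>s\<in>K'. norm (f (s + \<tau>) - A (f s)) \<le> \<delta>"
      using bebutov_ur_approx[OF beb \<open>\<delta> > 0\<close> K'(1,2), of n] by fast
    then show "\<exists>\<tau>\<in>\<Lambda>. n \<le> \<bar>\<tau>\<bar> \<and> (\<forall>t\<in>K. norm (convolution f (t + \<tau>) - A (convolution f t)) \<le> \<epsilon>)"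
      using estimate by fast
  qed
qed

end

theorem proposition3p1:
  fixes \<Lambda> :: "real set" and D :: "'x::banach set" and A :: "'x \<Rightarrow> 'x"
    and R :: "real \<Rightarrow> 'x \<Rightarrow> 'x" and f :: "real \<Rightarrow> 'x"
  assumes "\<Lambda> \<noteq> {}"
    and "closed_linear_operator D A"
    and "\<And>t. t > 0 \<Longrightarrow> bounded_linear (R t)"
    and "\<And>x. continuous_on {0<..} (\<lambda>t. R t x)"
    and "\<And>t x. t > 0 \<Longrightarrow> x \<in> D \<Longrightarrow> R t x \<in> D \<and> A (R t x) = R t (A x)"
    and "(\<lambda>t. onorm (R t)) integrable_on {0<..}"
    and "bounded (range f)" and "continuous_on UNIV f"
    and "\<And>t. f t \<in> D"
    and "bounded (range (\<lambda>t. A (f t)))"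
  defines "F \<equiv> (\<lambda>t. integral {..<t} (\<lambda>s. R (t - s) (f s)))"
  shows "(\<forall>t. (\<lambda>s. R (t - s) (f s)) integrable_on {..<t})
      \<and> (levitan_ap \<Lambda> D A f \<longrightarrow>
           bounded (range F) \<and> continuous_on UNIV F \<and> levitan_ap \<Lambda> D A F)
      \<and> (bebutov_ur \<Lambda> D A f \<longrightarrow>
           bounded (range F) \<and> continuous_on UNIV F \<and> bebutov_ur \<Lambda> D A F)"
proof -
  interpret commuting_integrable_operator_family R D A
    using assms(2-6)
    by (intro commuting_integrable_operator_family.intro integrable_operator_family.intro
        commuting_integrable_operator_family_axioms.intro)
  have f: "f \<in> bcontfun"
    using assms(7,8) by (simp add: bcontfun_def)
  have F: "F = convolution f"
    unfolding F_def by (intro ext integral_unique has_integral_convolution[OF f])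
  have "\<forall>t. (\<lambda>s. R (t - s) (f s)) integrable_on {..<t}"
    using has_integral_convolution[OF f] by blast
  moreover have "bounded (range F) \<and> continuous_on UNIV F"
    using convolution_bcontfun[OF f] by (simp add: F bcontfun_def)
  moreover have "levitan_ap \<Lambda> D A F" if lev: "levitan_ap \<Lambda> D A f"
    using levitan_ap_convolution[OF f _ lev] levitan_ap_imp_continuous_on_A[OF lev assms(1,8)] assms(10)
    by (simp add: F bcontfun_def)
  moreover have "bebutov_ur \<Lambda> D A F" if beb: "bebutov_ur \<Lambda> D A f"
    using bebutov_ur_convolution[OF f _ beb] bebutov_ur_imp_continuous_on_A[OF beb assms(8)] assms(10)
    by (simp add: F bcontfun_def)
  ultimately show ?thesis
    by blast
qed

end
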